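(* Let $\eta\in(0,1)$, let $\pi$ be a probability vector on $[K]$ with positive entries, let $\ell\in[-1,1]^K$ be fixed, and let $A\sim\pi$. Define $\tilde\ell_i=\ell_i\mathbb{I}(A=i)$, $\lambda_i=\frac{\pi_i\pi_A\ell_A}{\sum_{j}\pi_j^2}$ and $\pi'_i=\pi_i\big(1-\eta(\tilde\ell_i-\lambda_i)\big)$. Then for every probability vector $u$ on $[K]$ with positive entries, $$\langle\pi-u,\ell\rangle+\mathbb{E}\!\left[\eta^{-1}D_{LB}(u,\pi')\right]-\eta^{-1}D_{LB}(u,\pi)\le\frac{2\eta}{1-\eta}.$$
   Context: $D_{LB}$ is the Bregman divergence of the log-barrier $F(x)=-\sum_{i=1}^K\log x_i$: for $x,y$ with positive entries, $D_{LB}(y,x)=\sum_{i=1}^K\left(\frac{y_i}{x_i}-1-\log\frac{y_i}{x_i}\right)$. The expectation is over $A\sim\pi$. (Under these hypotheses $\pi'$ has positive entries and sums to one.) *)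

theory Defs
  imports Complex_Main
begin

text \<open>Index set [K] is modelled by a finite type 'k (K = CARD('k)).\<close>

definition D_LB :: "('k::finite \<Rightarrow> real) \<Rightarrow> ('k \<Rightarrow> real) \<Rightarrow> real" where
  "D_LB y x = (\<Sum>i\<in>UNIV. y i / x i - 1 - ln (y i / x i))"

definition ltilde :: "('k \<Rightarrow> real) \<Rightarrow> 'k \<Rightarrow> 'k \<Rightarrow> real" where
  "ltilde l a i = (if a = i then l i else 0)"

definition lam :: "('k::finite \<Rightarrow> real) \<Rightarrow> ('k \<Rightarrow> real) \<Rightarrow> 'k \<Rightarrow> 'k \<Rightarrow> real" where
  "lam \<pi> l a i = \<pi> i * \<pi> a * l a / (\<Sum>j\<in>UNIV. (\<pi> j)\<^sup>2)"

definition pi_upd :: "real \<Rightarrow> ('k::finite \<Rightarrow> real) \<Rightarrow> ('k \<Rightarrow> real) \<Rightarrow> 'k \<Rightarrow> 'k \<Rightarrow> real" where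
  "pi_upd \<eta> \<pi> l a i = \<pi> i * (1 - \<eta> * (ltilde l a i - lam \<pi> l a i))"

end

theory Submission
  imports Defs
begin

text \<open>The centred estimate \<open>g\<^sub>A(i) = \<ell>\<^sub>i \<bbbI>(A = i) - \<lambda>\<^sub>i\<close> satisfies \<open>|g| \<le> 1\<close> and
  \<open>g\<^sup>2 \<le> h\<close> with \<open>h\<^sub>A(i) = \<bbbI>(A = i) + \<pi>\<^sub>i \<pi>\<^sub>A / \<Sum>\<^sub>j \<pi>\<^sub>j\<^sup>2\<close>, whose mean is \<open>2 \<pi>\<^sub>i\<close>.
  Since \<open>1/(1 - x) = 1 + x + x\<^sup>2/(1 - x)\<close> and \<open>ln (1 - x) \<le> -x\<close>, each coordinate of
  \<open>D_LB(u, \<pi>') - D_LB(u, \<pi>)\<close> is at most \<open>\<eta>((u\<^sub>i/\<pi>\<^sub>i)(g\<^sub>i + \<eta> h\<^sub>i/(1-\<eta>)) - g\<^sub>i)\<close>.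
  In expectation \<open>\<bbbE> g\<^sub>A(i) = \<pi>\<^sub>i (\<ell>\<^sub>i - c)\<close> for a constant \<open>c\<close>, which cancels because
  \<open>u\<close> and \<open>\<pi>\<close> both sum to one, leaving \<open>\<langle>u - \<pi>, \<ell>\<rangle> + 2\<eta>/(1-\<eta>)\<close>.\<close>

lemma log_barrier_term_bound:
  fixes p v e g h :: real
  assumes "0 < p" "0 < v" "0 < e" "e < 1" "\<bar>g\<bar> \<le> 1" "g\<^sup>2 \<le> h"
  shows "v / (p * (1 - e * g)) - v / p + ln (1 - e * g) \<le> e * (v / p * (g + e / (1 - e) * h) - g)"
proof -
  have "e * g \<le> e" using assms mult_left_mono[of g 1 e] by auto
  then have lower: "1 - e \<le> 1 - e * g" by simp
  then have pos: "0 < 1 - e * g" using assms(4) by linarith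
  have "g\<^sup>2 / (1 - e * g) \<le> h / (1 - e)"
    using assms lower by (intro frac_le) (auto intro: order_trans[OF zero_le_power2])
  then have quad: "v / p * (e\<^sup>2 * (g\<^sup>2 / (1 - e * g))) \<le> v / p * (e\<^sup>2 * (h / (1 - e)))"
    using assms by (intro mult_left_mono) auto
  have "v / (p * (1 - e * g)) - v / p + ln (1 - e * g)
      \<le> v / p * (e * g + e\<^sup>2 * (g\<^sup>2 / (1 - e * g))) - e * g"
  proof -
    have "v / (p * (1 - e * g)) - v / p = v / p * (e * g + e\<^sup>2 * (g\<^sup>2 / (1 - e * g)))"
      using pos assms(1) by (simp add: field_simps power2_eq_square)
    then show ?thesis using ln_le_minus_one[OF pos] by simp
  qed
  also have "\<dots> \<le> v / p * (e * g + e\<^sup>2 * (h / (1 - e))) - e * g"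
    using quad by (simp add: distrib_left)
  also have "\<dots> = e * (v / p * (g + e / (1 - e) * h) - g)"
    by (simp add: algebra_simps power2_eq_square)
  finally show ?thesis .
qed

lemma D_LB_multiplicative_update_le:
  fixes \<pi> u g h :: "'k::finite \<Rightarrow> real"
  assumes "0 < \<eta>" "\<eta> < 1" "\<forall>i. 0 < \<pi> i" "\<forall>i. 0 < u i"
    and "\<forall>i. \<bar>g i\<bar> \<le> 1" "\<forall>i. (g i)\<^sup>2 \<le> h i"
  shows "D_LB u (\<lambda>i. \<pi> i * (1 - \<eta> * g i)) - D_LB u \<pi>
    \<le> \<eta> * (\<Sum>i\<in>UNIV. u i / \<pi> i * (g i + \<eta> / (1 - \<eta>) * h i) - g i)"
proof -
  have pos: "0 < 1 - \<eta> * g i" for i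
  proof -
    have "\<eta> * g i \<le> \<eta>"
      using assms(1,5) mult_left_mono[of "g i" 1 \<eta>] by (auto dest: abs_le_D1)
    then show ?thesis using assms(2) by linarith
  qed
  have "D_LB u (\<lambda>i. \<pi> i * (1 - \<eta> * g i)) - D_LB u \<pi>
      = (\<Sum>i\<in>UNIV. u i / (\<pi> i * (1 - \<eta> * g i)) - u i / \<pi> i + ln (1 - \<eta> * g i))"
  proof -
    have ln_split: "ln (u i / (\<pi> i * (1 - \<eta> * g i))) = ln (u i / \<pi> i) - ln (1 - \<eta> * g i)" for i
      using assms(3,4)[rule_format, of i] pos[of i] by (simp add: ln_div ln_mult)
    show ?thesis unfolding D_LB_def sum_subtractf[symmetric]
    proof (rule sum.cong[OF refl])
      fix i
      show "u i / (\<pi> i * (1 - \<eta> * g i)) - 1 - ln (u i / (\<pi> i * (1 - \<eta> * g i)))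
          - (u i / \<pi> i - 1 - ln (u i / \<pi> i))
        = u i / (\<pi> i * (1 - \<eta> * g i)) - u i / \<pi> i + ln (1 - \<eta> * g i)"
        unfolding ln_split by simp
    qed
  qed
  also have "\<dots> \<le> (\<Sum>i\<in>UNIV. \<eta> * (u i / \<pi> i * (g i + \<eta> / (1 - \<eta>) * h i) - g i))"
    using assms by (intro sum_mono log_barrier_term_bound) auto
  finally show ?thesis by (simp add: sum_distrib_left)
qed

lemma mult_le_sum_squares:
  fixes f :: "'k::finite \<Rightarrow> real"
  shows "f i * f j \<le> (\<Sum>k\<in>UNIV. (f k)\<^sup>2)"
proof -
  have "2 * (f i * f j) \<le> (f i)\<^sup>2 + (f j)\<^sup>2"
    using zero_le_power2[of "f i - f j"] by (simp add: power2_diff)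
  moreover have "(f i)\<^sup>2 \<le> (\<Sum>k\<in>UNIV. (f k)\<^sup>2)" "(f j)\<^sup>2 \<le> (\<Sum>k\<in>UNIV. (f k)\<^sup>2)"
    by (auto intro: member_le_sum)
  ultimately show ?thesis by linarith
qed

definition loss_estimate :: "('k::finite \<Rightarrow> real) \<Rightarrow> ('k \<Rightarrow> real) \<Rightarrow> 'k \<Rightarrow> 'k \<Rightarrow> real" where
  "loss_estimate \<pi> l a i = ltilde l a i - lam \<pi> l a i"

definition variance_proxy :: "('k::finite \<Rightarrow> real) \<Rightarrow> 'k \<Rightarrow> 'k \<Rightarrow> real" where
  "variance_proxy \<pi> a i = (if a = i then 1 else 0) + \<pi> i * \<pi> a / (\<Sum>j\<in>UNIV. (\<pi> j)\<^sup>2)"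

lemma sum_squares_pos:
  fixes \<pi> :: "'k::finite \<Rightarrow> real"
  assumes "\<forall>i. 0 < \<pi> i"
  shows "0 < (\<Sum>j\<in>UNIV. (\<pi> j)\<^sup>2)"
proof (intro sum_pos)
  show "0 < (\<pi> i)\<^sup>2" for i using assms[rule_format, of i] by simp
qed simp_all

lemma loss_estimate_bounds:
  fixes \<pi> l :: "'k::finite \<Rightarrow> real"
  assumes "\<forall>i. 0 < \<pi> i" "\<forall>i. \<bar>l i\<bar> \<le> 1"
  shows "\<bar>loss_estimate \<pi> l a i\<bar> \<le> 1"
    and "(loss_estimate \<pi> l a i)\<^sup>2 \<le> variance_proxy \<pi> a i"
proof -
  define r where "r = \<pi> i * \<pi> a / (\<Sum>j\<in>UNIV. (\<pi> j)\<^sup>2)"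
  have r: "0 \<le> r" "r \<le> 1"
    using assms(1) sum_squares_pos[OF assms(1)] mult_le_sum_squares[of \<pi> i a]
    by (auto simp: r_def less_imp_le)
  have lam: "lam \<pi> l a i = r * l a"
    by (simp add: lam_def r_def)
  have proxy: "variance_proxy \<pi> a i = (if a = i then 1 else 0) + r"
    by (simp add: variance_proxy_def r_def)
  have "\<bar>loss_estimate \<pi> l a i\<bar> \<le> 1 \<and> (loss_estimate \<pi> l a i)\<^sup>2 \<le> variance_proxy \<pi> a i"
  proof (cases "a = i")
    case True
    have "loss_estimate \<pi> l a i = (1 - r) * l i"
      unfolding loss_estimate_def lam using True by (simp add: ltilde_def algebra_simps)
    then have "\<bar>loss_estimate \<pi> l a i\<bar> = \<bar>l i\<bar> * (1 - r)"
      using r by (simp add: abs_mult)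
    also have "\<dots> \<le> 1" using assms(2) r by (simp add: mult_le_one)
    finally have "\<bar>loss_estimate \<pi> l a i\<bar> \<le> 1" .
    moreover from this have "(loss_estimate \<pi> l a i)\<^sup>2 \<le> 1"
      by (simp add: abs_square_le_1)
    ultimately show ?thesis
      unfolding proxy using True r by simp
  next
    case False
    have abs: "\<bar>loss_estimate \<pi> l a i\<bar> \<le> r"
      using False r assms(2) mult_left_mono[of "\<bar>l a\<bar>" 1 r]
      by (simp add: loss_estimate_def ltilde_def lam abs_mult mult.commute)
    then have "\<bar>loss_estimate \<pi> l a i\<bar> * \<bar>loss_estimate \<pi> l a i\<bar> \<le> r * r"
      by (intro mult_mono) auto
    then have "(loss_estimate \<pi> l a i)\<^sup>2 \<le> r * r"
      by (simp add: power2_eq_square abs_mult_self_eq)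
    also have "\<dots> \<le> r" using r mult_left_mono[of r 1 r] by simp
    finally show ?thesis
      unfolding proxy using False abs r by simp
  qed
  then show "\<bar>loss_estimate \<pi> l a i\<bar> \<le> 1"
    and "(loss_estimate \<pi> l a i)\<^sup>2 \<le> variance_proxy \<pi> a i" by auto
qed

lemma expected_ltilde:
  fixes \<pi> l :: "'k::finite \<Rightarrow> real"
  shows "(\<Sum>a\<in>UNIV. \<pi> a * ltilde l a i) = \<pi> i * l i"
  unfolding ltilde_def by (simp add: if_distrib[of "\<lambda>x. _ * x"] cong: if_cong)

lemma expected_lam:
  fixes \<pi> l :: "'k::finite \<Rightarrow> real"
  shows "(\<Sum>a\<in>UNIV. \<pi> a * lam \<pi> l a i)
    = \<pi> i * ((\<Sum>a\<in>UNIV. (\<pi> a)\<^sup>2 * l a) / (\<Sum>j\<in>UNIV. (\<pi> j)\<^sup>2))"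
  unfolding lam_def
  by (simp add: sum_divide_distrib[symmetric] sum_distrib_left power2_eq_square algebra_simps)

lemma expected_variance_proxy:
  fixes \<pi> :: "'k::finite \<Rightarrow> real"
  assumes "\<forall>i. 0 < \<pi> i"
  shows "(\<Sum>a\<in>UNIV. \<pi> a * variance_proxy \<pi> a i) = 2 * \<pi> i"
proof -
  define S where "S = (\<Sum>j\<in>UNIV. (\<pi> j)\<^sup>2)"
  have indicator: "(\<Sum>a\<in>UNIV. \<pi> a * (if a = i then 1 else 0)) = \<pi> i"
    by (simp add: if_distrib[of "\<lambda>x. _ * x"] cong: if_cong)
  have "(\<Sum>a\<in>UNIV. \<pi> a * (\<pi> i * \<pi> a / S)) = (\<Sum>a\<in>UNIV. \<pi> i * (\<pi> a)\<^sup>2) / S"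
    by (simp add: sum_divide_distrib power2_eq_square mult_ac)
  also have "\<dots> = \<pi> i"
    using sum_squares_pos[OF assms] by (simp add: S_def sum_distrib_left[symmetric])
  finally show ?thesis
    using indicator unfolding variance_proxy_def S_def[symmetric]
    by (simp add: distrib_left sum.distrib)
qed

lemma expected_loss_estimate:
  fixes \<pi> l :: "'k::finite \<Rightarrow> real"
  shows "(\<Sum>a\<in>UNIV. \<pi> a * loss_estimate \<pi> l a i)
    = \<pi> i * (l i - (\<Sum>a\<in>UNIV. (\<pi> a)\<^sup>2 * l a) / (\<Sum>j\<in>UNIV. (\<pi> j)\<^sup>2))"
  unfolding loss_estimate_def right_diff_distrib sum_subtractf
  by (simp add: expected_ltilde expected_lam)

lemma expected_log_barrier_drift:
  fixes \<eta> :: real and \<pi> u l :: "'k::finite \<Rightarrow> real"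
  assumes "\<eta> < 1" "\<forall>i. 0 < \<pi> i" "(\<Sum>i\<in>UNIV. \<pi> i) = 1" "(\<Sum>i\<in>UNIV. u i) = 1"
  shows "(\<Sum>a\<in>UNIV. \<pi> a * (\<Sum>i\<in>UNIV. u i / \<pi> i
            * (loss_estimate \<pi> l a i + \<eta> / (1 - \<eta>) * variance_proxy \<pi> a i)
            - loss_estimate \<pi> l a i))
    = (\<Sum>i\<in>UNIV. (u i - \<pi> i) * l i) + 2 * \<eta> / (1 - \<eta>)"
proof -
  define c where "c = (\<Sum>a\<in>UNIV. (\<pi> a)\<^sup>2 * l a) / (\<Sum>j\<in>UNIV. (\<pi> j)\<^sup>2)"
  define k where "k = 2 * \<eta> / (1 - \<eta>)"
  have mean: "(\<Sum>a\<in>UNIV. \<pi> a * loss_estimate \<pi> l a i) = \<pi> i * (l i - c)" for i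
    unfolding c_def by (rule expected_loss_estimate)
  have coordinate: "(\<Sum>a\<in>UNIV. \<pi> a * (u i / \<pi> i
            * (loss_estimate \<pi> l a i + \<eta> / (1 - \<eta>) * variance_proxy \<pi> a i)
            - loss_estimate \<pi> l a i))
      = (u i - \<pi> i) * (l i - c) + k * u i" for i
  proof -
    have "(\<Sum>a\<in>UNIV. \<pi> a * (u i / \<pi> i
            * (loss_estimate \<pi> l a i + \<eta> / (1 - \<eta>) * variance_proxy \<pi> a i)
            - loss_estimate \<pi> l a i))
        = (u i / \<pi> i - 1) * (\<Sum>a\<in>UNIV. \<pi> a * loss_estimate \<pi> l a i)
          + u i / \<pi> i * (\<eta> / (1 - \<eta>)) * (\<Sum>a\<in>UNIV. \<pi> a * variance_proxy \<pi> a i)"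
      unfolding sum_distrib_left sum.distrib[symmetric] by (rule sum.cong) (simp_all add: algebra_simps)
    also have "\<dots> = (u i - \<pi> i) * (l i - c) + k * u i"
      using assms(1) assms(2)[rule_format, of i]
      by (simp add: mean expected_variance_proxy[OF assms(2)] k_def field_simps)
    finally show ?thesis .
  qed
  have "(\<Sum>a\<in>UNIV. \<pi> a * (\<Sum>i\<in>UNIV. u i / \<pi> i
            * (loss_estimate \<pi> l a i + \<eta> / (1 - \<eta>) * variance_proxy \<pi> a i)
            - loss_estimate \<pi> l a i))
      = (\<Sum>i\<in>UNIV. \<Sum>a\<in>UNIV. \<pi> a * (u i / \<pi> i
            * (loss_estimate \<pi> l a i + \<eta> / (1 - \<eta>) * variance_proxy \<pi> a i)
            - loss_estimate \<pi> l a i))"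
    unfolding sum_distrib_left by (rule sum.swap)
  also have "\<dots> = (\<Sum>i\<in>UNIV. (u i - \<pi> i) * (l i - c) + k * u i)"
    by (simp only: coordinate)
  also have "\<dots> = (\<Sum>i\<in>UNIV. (u i - \<pi> i) * l i)
      - c * ((\<Sum>i\<in>UNIV. u i) - (\<Sum>i\<in>UNIV. \<pi> i)) + k * (\<Sum>i\<in>UNIV. u i)"
    by (simp add: sum.distrib sum_subtractf sum_distrib_left algebra_simps)
  finally show ?thesis using assms(3,4) by (simp add: k_def)
qed

theorem mainTheorem4:
  fixes \<eta> :: real and \<pi> u l :: "'k::finite \<Rightarrow> real"
  assumes "0 < \<eta>" "\<eta> < 1"
    and "\<forall>i. 0 < \<pi> i" "(\<Sum>i\<in>UNIV. \<pi> i) = 1"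
    and "\<forall>i. \<bar>l i\<bar> \<le> 1"
    and "\<forall>i. 0 < u i" "(\<Sum>i\<in>UNIV. u i) = 1"
  shows "(\<Sum>i\<in>UNIV. (\<pi> i - u i) * l i)
           + (\<Sum>a\<in>UNIV. \<pi> a * (D_LB u (pi_upd \<eta> \<pi> l a) / \<eta>))
           - D_LB u \<pi> / \<eta> \<le> 2 * \<eta> / (1 - \<eta>)"
proof -
  define T where "T a = (\<Sum>i\<in>UNIV. u i / \<pi> i
      * (loss_estimate \<pi> l a i + \<eta> / (1 - \<eta>) * variance_proxy \<pi> a i)
      - loss_estimate \<pi> l a i)" for a
  have step: "D_LB u (pi_upd \<eta> \<pi> l a) / \<eta> \<le> D_LB u \<pi> / \<eta> + T a" for a
  proof -
    have "pi_upd \<eta> \<pi> l a = (\<lambda>i. \<pi> i * (1 - \<eta> * loss_estimate \<pi> l a i))"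
      by (simp add: fun_eq_iff pi_upd_def loss_estimate_def)
    moreover have "D_LB u (\<lambda>i. \<pi> i * (1 - \<eta> * loss_estimate \<pi> l a i)) - D_LB u \<pi> \<le> \<eta> * T a"
      unfolding T_def by (rule D_LB_multiplicative_update_le)
        (use assms loss_estimate_bounds[OF assms(3,5)] in auto)
    ultimately have "D_LB u (pi_upd \<eta> \<pi> l a) - D_LB u \<pi> \<le> \<eta> * T a" by simp
    then show ?thesis using assms(1) by (simp add: field_simps)
  qed
  have "(\<Sum>a\<in>UNIV. \<pi> a * (D_LB u (pi_upd \<eta> \<pi> l a) / \<eta>))
      \<le> (\<Sum>a\<in>UNIV. \<pi> a * (D_LB u \<pi> / \<eta> + T a))"
    using assms(3) step by (intro sum_mono mult_left_mono) (auto intro: less_imp_le)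
  also have "\<dots> = (\<Sum>a\<in>UNIV. \<pi> a) * (D_LB u \<pi> / \<eta>) + (\<Sum>a\<in>UNIV. \<pi> a * T a)"
    by (simp add: distrib_left sum.distrib sum_distrib_right sum_divide_distrib)
  also have "\<dots> = D_LB u \<pi> / \<eta> + (\<Sum>i\<in>UNIV. (u i - \<pi> i) * l i) + 2 * \<eta> / (1 - \<eta>)"
    using expected_log_barrier_drift[OF assms(2,3,4,7), of l] assms(4) by (simp add: T_def)
  finally show ?thesis
    by (simp add: left_diff_distrib sum_subtractf)
qed

end
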